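(* Let $(l,k,b)$ be a suspension triplet for $(X_A,\sigma_A)$ and $c=l-k$. For $(x,r),(x',r')\in X^{\mathbb R}_{A,b}$ we have $(x,r)\sim_{l,k}(x',r')$ if and only if there exist $n,n'\in\mathbb Z_+$ such that $\sigma_A^n(x)=\sigma_A^{n'}(x')$, $r-c^n(x)=r'-c^{n'}(x')$, and $r-c^m(x)\ge l(\sigma_A^m(x))$ for all $0\le m<n$ and $r'-c^{m'}(x')\ge l(\sigma_A^{m'}(x'))$ for all $0\le m'<n'$.
   Context: Let $N>1$ and $A=[A(i,j)]_{i,j=1}^N$ an irreducible $\{0,1\}$-matrix which is not a permutation matrix. $X_A$ is the compact space of sequences $(x_n)_{n\in\mathbb N}$ with $x_n\in\{1,\dots,N\}$ and $A(x_n,x_{n+1})=1$ for all $n$; $\sigma_A((x_n)_n)=(x_{n+1})_n$. $\mathbb Z_+$, $\mathbb R_+$ denote nonnegative integers/reals. For a function $f$ on $X_A$ and $m\in\mathbb Z_+$, $f^m(x)=\sum_{i=0}^{m-1}f(\sigma_A^i(x))$ (so $f^0=0$). $H^A$ is the quotient of $C(X_A,\mathbb Z)$ by $\{u-u\circ\sigma_A\}$, $H^A_+$ the classes of $\mathbb Z_+$-valued continuous functions; $[f]\in H^A_+$ is an order unit if for every $[u]\in H^A$ some $n\in\mathbb N$ has $n[f]-[u]\in H^A_+$. A suspension triplet is $(l,k,b)$ with $l,k\in C(X_A,\mathbb R_+)$, $b\in C(X_A,\mathbb R)$ such that $c=l-k$ is integer-valued with $[c]$ an order unit, and $l-b$,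 $k-b\circ\sigma_A$ take values in $\mathbb Z_+$. $X^{\mathbb R}_{A,b}=\{(x,r)\in X_A\times\mathbb R: r\ge b(x)\}$ and $\sim_{l,k}$ is the equivalence relation on $X^{\mathbb R}_{A,b}$ generated by $(x,r)\sim_{l,k}(\sigma_A(x),r-c(x))$ whenever $r\ge l(x)$. *)

theory Defs
  imports "HOL-Analysis.Analysis"
begin

text \<open>Matrices are N x N {0,1}-matrices indexed by {1..N}, represented as nat => nat => nat.
Points of X_A are sequences nat => nat; the space nat => nat carries the product
topology of discrete nat (instance from Function_Topology), so X_A gets the subspace topology.\<close>

fun mpow :: "nat \<Rightarrow> (nat \<Rightarrow> nat \<Rightarrow> nat) \<Rightarrow> nat \<Rightarrow> nat \<Rightarrow> nat \<Rightarrow> nat" where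
  "mpow N A 0 i j = (if i = j then 1 else 0)"
| "mpow N A (Suc m) i j = (\<Sum>t\<in>{1..N}. mpow N A m i t * A t j)"

definition zero_one_matrix :: "nat \<Rightarrow> (nat \<Rightarrow> nat \<Rightarrow> nat) \<Rightarrow> bool" where
  "zero_one_matrix N A \<longleftrightarrow> (\<forall>i\<in>{1..N}. \<forall>j\<in>{1..N}. A i j \<in> {0, 1})"

definition irreducible_matrix :: "nat \<Rightarrow> (nat \<Rightarrow> nat \<Rightarrow> nat) \<Rightarrow> bool" where
  "irreducible_matrix N A \<longleftrightarrow>
     (\<forall>i\<in>{1..N}. \<forall>j\<in>{1..N}. \<exists>m>0. mpow N A m i j > 0)"

definition permutation_matrix :: "nat \<Rightarrow> (nat \<Rightarrow> nat \<Rightarrow> nat) \<Rightarrow> bool" where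
  "permutation_matrix N A \<longleftrightarrow>
     (\<exists>\<pi>. bij_betw \<pi> {1..N} {1..N} \<and>
        (\<forall>i\<in>{1..N}. \<forall>j\<in>{1..N}. A i j = (if j = \<pi> i then 1 else 0)))"

definition XA :: "nat \<Rightarrow> (nat \<Rightarrow> nat \<Rightarrow> nat) \<Rightarrow> (nat \<Rightarrow> nat) set" where
  "XA N A = {x. \<forall>n. x n \<in> {1..N} \<and> A (x n) (x (Suc n)) = 1}"

definition sigmaA :: "(nat \<Rightarrow> nat) \<Rightarrow> (nat \<Rightarrow> nat)" where
  "sigmaA x = (\<lambda>n. x (Suc n))"

definition birk :: "((nat \<Rightarrow> nat) \<Rightarrow> 'a::comm_monoid_add) \<Rightarrow> nat \<Rightarrow> (nat \<Rightarrow> nat) \<Rightarrow> 'a" where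
  "birk f m x = (\<Sum>i<m. f ((sigmaA ^^ i) x))"

definition CZ :: "nat \<Rightarrow> (nat \<Rightarrow> nat \<Rightarrow> nat) \<Rightarrow> ((nat \<Rightarrow> nat) \<Rightarrow> int) set" where
  "CZ N A = {f. continuous_on (XA N A) f}"

text \<open>[f] in H^A_+ : f is cohomologous (mod coboundaries u - u o sigma, u in C(X_A,Z))
  to a Z_+-valued continuous function.\<close>
definition HA_pos :: "nat \<Rightarrow> (nat \<Rightarrow> nat \<Rightarrow> nat) \<Rightarrow> ((nat \<Rightarrow> nat) \<Rightarrow> int) \<Rightarrow> bool" where
  "HA_pos N A f \<longleftrightarrow>
     (\<exists>g\<in>CZ N A. \<exists>u\<in>CZ N A. (\<forall>x\<in>XA N A. g x \<ge> 0 \<and> f x = g x + (u x - u (sigmaA x))))"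

definition order_unit :: "nat \<Rightarrow> (nat \<Rightarrow> nat \<Rightarrow> nat) \<Rightarrow> ((nat \<Rightarrow> nat) \<Rightarrow> int) \<Rightarrow> bool" where
  "order_unit N A f \<longleftrightarrow>
     f \<in> CZ N A \<and> HA_pos N A f \<and>
     (\<forall>u\<in>CZ N A. \<exists>n::nat. n \<ge> 1 \<and> HA_pos N A (\<lambda>x. int n * f x - u x))"

definition suspension_triplet ::
  "nat \<Rightarrow> (nat \<Rightarrow> nat \<Rightarrow> nat) \<Rightarrow> ((nat \<Rightarrow> nat) \<Rightarrow> real) \<Rightarrow> ((nat \<Rightarrow> nat) \<Rightarrow> real)
     \<Rightarrow> ((nat \<Rightarrow> nat) \<Rightarrow> real) \<Rightarrow> bool" where
  "suspension_triplet N A l k b \<longleftrightarrow>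
     continuous_on (XA N A) l \<and> continuous_on (XA N A) k \<and> continuous_on (XA N A) b \<and>
     (\<forall>x\<in>XA N A. l x \<ge> 0 \<and> k x \<ge> 0) \<and>
     (\<exists>c::(nat \<Rightarrow> nat) \<Rightarrow> int. (\<forall>x\<in>XA N A. real_of_int (c x) = l x - k x) \<and> order_unit N A c) \<and>
     (\<forall>x\<in>XA N A. l x - b x \<in> \<nat>) \<and>
     (\<forall>x\<in>XA N A. k x - b (sigmaA x) \<in> \<nat>)"

definition XAR :: "nat \<Rightarrow> (nat \<Rightarrow> nat \<Rightarrow> nat) \<Rightarrow> ((nat \<Rightarrow> nat) \<Rightarrow> real) \<Rightarrow> ((nat \<Rightarrow> nat) \<times> real) set" where
  "XAR N A b = {(x, r). x \<in> XA N A \<and> r \<ge> b x}"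

definition susp_step ::
  "nat \<Rightarrow> (nat \<Rightarrow> nat \<Rightarrow> nat) \<Rightarrow> ((nat \<Rightarrow> nat) \<Rightarrow> real) \<Rightarrow> ((nat \<Rightarrow> nat) \<Rightarrow> real)
     \<Rightarrow> ((nat \<Rightarrow> nat) \<Rightarrow> real) \<Rightarrow> (((nat \<Rightarrow> nat) \<times> real) \<times> ((nat \<Rightarrow> nat) \<times> real)) set" where
  "susp_step N A l k b = {((x, r), (sigmaA x, r - (l x - k x))) | x r. (x, r) \<in> XAR N A b \<and> r \<ge> l x}"

definition susp_equiv ::
  "nat \<Rightarrow> (nat \<Rightarrow> nat \<Rightarrow> nat) \<Rightarrow> ((nat \<Rightarrow> nat) \<Rightarrow> real) \<Rightarrow> ((nat \<Rightarrow> nat) \<Rightarrow> real)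
     \<Rightarrow> ((nat \<Rightarrow> nat) \<Rightarrow> real) \<Rightarrow> (((nat \<Rightarrow> nat) \<times> real) \<times> ((nat \<Rightarrow> nat) \<times> real)) set" where
  "susp_equiv N A l k b =
     \<Inter>{E. equiv (XAR N A b) E \<and> susp_step N A l k b \<subseteq> E}"

end

theory Submission
  imports Defs
begin

text \<open>The relation \<open>\<sim>\<^sub>l\<^sub>,\<^sub>k\<close> is the equivalence relation generated by a partial map:
  \<open>(x, r) \<mapsto> (\<sigma>\<^sub>A x, r - c x)\<close>, defined where \<open>r \<ge> l x\<close>. For any partial map \<open>g\<close> with domain \<open>D\<close>
  that preserves the ambient set, the generated equivalence relation identifies two points
  exactly when their admissible forward orbits meet: this relation contains the steps,
  is contained in every equivalence relation containing them, and is itself transitive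
  because two admissible orbits through a common point can be prolonged along the
  longer of the two.\<close>

definition admissible :: "('a \<Rightarrow> 'a) \<Rightarrow> ('a \<Rightarrow> bool) \<Rightarrow> nat \<Rightarrow> 'a \<Rightarrow> bool" where
  "admissible g D n p \<longleftrightarrow> (\<forall>m<n. D ((g ^^ m) p))"

definition orbits_meet :: "('a \<Rightarrow> 'a) \<Rightarrow> ('a \<Rightarrow> bool) \<Rightarrow> 'a \<Rightarrow> 'a \<Rightarrow> bool" where
  "orbits_meet g D p q \<longleftrightarrow>
     (\<exists>n n'. (g ^^ n) p = (g ^^ n') q \<and> admissible g D n p \<and> admissible g D n' q)"

lemma admissible_add:
  "admissible g D (a + b) p \<longleftrightarrow> admissible g D a p \<and> admissible g D b ((g ^^ a) p)"
proof -
  have shift: "(g ^^ (a + j)) p = (g ^^ j) ((g ^^ a) p)" for j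
    by (simp only: add.commute[of a j] funpow_add comp_apply)
  have "(\<forall>m<a + b. D ((g ^^ m) p)) \<longleftrightarrow> (\<forall>m<a. D ((g ^^ m) p)) \<and> (\<forall>j<b. D ((g ^^ (a + j)) p))"
    by (metis add_less_cancel_left le_add_diff_inverse not_less trans_less_add1)
  then show ?thesis
    unfolding admissible_def shift .
qed

lemma orbits_meet_refl: "orbits_meet g D p p"
  unfolding orbits_meet_def admissible_def by blast

lemma orbits_meet_sym: "orbits_meet g D p q \<Longrightarrow> orbits_meet g D q p"
  unfolding orbits_meet_def by metis

lemma orbits_meet_prolong:
  assumes meet: "(g ^^ n1) p = (g ^^ n2) q"
    and p: "admissible g D n1 p" and q: "admissible g D (n2 + j) q"
  shows "(g ^^ (n1 + j)) p = (g ^^ (n2 + j)) q \<and> admissible g D (n1 + j) p"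
proof -
  have "(g ^^ (n1 + j)) p = (g ^^ (n2 + j)) q"
    using meet by (simp add: funpow_add add.commute)
  moreover have "admissible g D j ((g ^^ n1) p)"
    using q meet by (simp add: admissible_add)
  ultimately show ?thesis
    using p by (simp add: admissible_add)
qed

lemma orbits_meet_trans:
  assumes "orbits_meet g D p q" and "orbits_meet g D q w"
  shows "orbits_meet g D p w"
proof -
  have one_sided: "orbits_meet g D p w"
    if pq: "(g ^^ n1) p = (g ^^ n2) q" "admissible g D n1 p"
      and qw: "(g ^^ n3) q = (g ^^ n4) w" "admissible g D n3 q" "admissible g D n4 w"
      and "n2 \<le> n3"
    for p q w n1 n2 n3 n4
  proof -
    obtain j where j: "n3 = n2 + j"
      using \<open>n2 \<le> n3\<close> le_Suc_ex by blast
    then show ?thesis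
      using orbits_meet_prolong[OF pq, of j] qw unfolding orbits_meet_def by metis
  qed
  from assms obtain n1 n2 n3 n4 where
    "(g ^^ n1) p = (g ^^ n2) q" "admissible g D n1 p" "admissible g D n2 q"
    "(g ^^ n3) q = (g ^^ n4) w" "admissible g D n3 q" "admissible g D n4 w"
    unfolding orbits_meet_def by blast
  then show ?thesis
    using one_sided[of n1 p n2 q n3 n4 w] one_sided[of n4 w n3 q n2 n1 p]
    by (metis nle_le orbits_meet_sym)
qed

lemma admissible_run_in_equiv:
  assumes equiv: "equiv X E"
    and step: "\<And>p. p \<in> X \<Longrightarrow> D p \<Longrightarrow> g p \<in> X \<and> (p, g p) \<in> E"
    and "p \<in> X" and "admissible g D n p"
  shows "(p, (g ^^ n) p) \<in> E \<and> (g ^^ n) p \<in> X"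
  using assms(4)
proof (induction n)
  case 0
  then show ?case
    using equiv \<open>p \<in> X\<close> by (simp add: equiv_def refl_on_def)
next
  case (Suc n)
  then have IH: "(p, (g ^^ n) p) \<in> E" "(g ^^ n) p \<in> X" and "D ((g ^^ n) p)"
    by (simp_all add: admissible_def)
  then have "(g ^^ Suc n) p \<in> X" "((g ^^ n) p, (g ^^ Suc n) p) \<in> E"
    using step by auto
  then show ?case
    using IH equiv by (meson equivE transD)
qed

theorem generated_equiv_partial_map:
  assumes closed: "\<And>p. p \<in> X \<Longrightarrow> D p \<Longrightarrow> g p \<in> X"
  shows "\<Inter>{E. equiv X E \<and> {(p, g p) | p. p \<in> X \<and> D p} \<subseteq> E}
           = {(p, q). p \<in> X \<and> q \<in> X \<and> orbits_meet g D p q}"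
    (is "\<Inter>?Es = ?M")
proof
  have "equiv X ?M"
    by (rule equivI) (auto intro: refl_onI symI transI orbits_meet_refl
        orbits_meet_sym orbits_meet_trans)
  moreover have "orbits_meet g D p (g p)" if "D p" for p
    unfolding orbits_meet_def admissible_def using that
    by (intro exI[of _ 1] exI[of _ 0]) simp
  ultimately have "?M \<in> ?Es"
    using closed by auto
  then show "\<Inter>?Es \<subseteq> ?M"
    by blast
next
  show "?M \<subseteq> \<Inter>?Es"
  proof (intro subsetI InterI)
    fix pq E
    assume "pq \<in> ?M" and "E \<in> ?Es"
    then have equiv: "equiv X E" and steps: "\<And>p. p \<in> X \<Longrightarrow> D p \<Longrightarrow> (p, g p) \<in> E"
      by auto
    from \<open>pq \<in> ?M\<close> obtain p q n n' where pq: "pq = (p, q)" "p \<in> X" "q \<in> X"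
      and meet: "(g ^^ n) p = (g ^^ n') q" "admissible g D n p" "admissible g D n' q"
      unfolding orbits_meet_def by blast
    have "(p, (g ^^ n) p) \<in> E" "(q, (g ^^ n') q) \<in> E"
      using admissible_run_in_equiv[OF equiv] closed steps pq meet by blast+
    then show "pq \<in> E"
      using equiv meet(1) pq(1) by (metis equivE symD transD)
  qed
qed

definition susp_map ::
  "((nat \<Rightarrow> nat) \<Rightarrow> real) \<Rightarrow> ((nat \<Rightarrow> nat) \<Rightarrow> real) \<Rightarrow> (nat \<Rightarrow> nat) \<times> real \<Rightarrow> (nat \<Rightarrow> nat) \<times> real"
  where "susp_map l k p = (sigmaA (fst p), snd p - (l (fst p) - k (fst p)))"

lemma susp_map_funpow:
  "(susp_map l k ^^ m) (x, r) = ((sigmaA ^^ m) x, r - birk (\<lambda>y. l y - k y) m x)"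
  by (induction m) (auto simp: susp_map_def birk_def)

lemma sigmaA_XA: "x \<in> XA N A \<Longrightarrow> sigmaA x \<in> XA N A"
  unfolding XA_def sigmaA_def by auto

lemma susp_step_eq:
  "susp_step N A l k b =
     {(p, susp_map l k p) | p. p \<in> XAR N A b \<and> snd p \<ge> l (fst p)}"
  unfolding susp_step_def susp_map_def by force

lemma susp_map_XAR:
  assumes "suspension_triplet N A l k b"
    and "p \<in> XAR N A b" and "snd p \<ge> l (fst p)"
  shows "susp_map l k p \<in> XAR N A b"
proof -
  obtain x r where p: "p = (x, r)" "x \<in> XA N A" "r \<ge> l x"
    using assms(2,3) unfolding XAR_def by auto
  have "k x - b (sigmaA x) \<in> \<nat>"
    using assms(1) p(2) unfolding suspension_triplet_def by blast
  then have "b (sigmaA x) \<le> k x"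
    by (metis Nats_cases diff_ge_0_iff_ge of_nat_0_le_iff)
  then show ?thesis
    using p sigmaA_XA[OF p(2)] unfolding XAR_def susp_map_def by auto
qed

theorem lemma2p1:
  fixes N :: nat and A :: "nat \<Rightarrow> nat \<Rightarrow> nat"
    and l k b :: "(nat \<Rightarrow> nat) \<Rightarrow> real"
    and x x' :: "nat \<Rightarrow> nat" and r r' :: real
  assumes "N > 1"
    and "zero_one_matrix N A"
    and "irreducible_matrix N A"
    and "\<not> permutation_matrix N A"
    and "suspension_triplet N A l k b"
    and "(x, r) \<in> XAR N A b" and "(x', r') \<in> XAR N A b"
  shows "((x, r), (x', r')) \<in> susp_equiv N A l k b \<longleftrightarrow>
    (\<exists>n n' :: nat.
       (sigmaA ^^ n) x = (sigmaA ^^ n') x' \<and>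
       r - birk (\<lambda>y. l y - k y) n x = r' - birk (\<lambda>y. l y - k y) n' x' \<and>
       (\<forall>m<n. r - birk (\<lambda>y. l y - k y) m x \<ge> l ((sigmaA ^^ m) x)) \<and>
       (\<forall>m'<n'. r' - birk (\<lambda>y. l y - k y) m' x' \<ge> l ((sigmaA ^^ m') x')))"
proof -
  let ?D = "\<lambda>p :: (nat \<Rightarrow> nat) \<times> real. snd p \<ge> l (fst p)"
  have "susp_equiv N A l k b =
          {(p, q). p \<in> XAR N A b \<and> q \<in> XAR N A b \<and> orbits_meet (susp_map l k) ?D p q}"
    unfolding susp_equiv_def susp_step_eq
    by (rule generated_equiv_partial_map) (rule susp_map_XAR[OF assms(5)])
  then show ?thesis
    using assms(6,7) by (simp add: orbits_meet_def admissible_def susp_map_funpow)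
qed

end
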